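(* Let $\mathfrak M$ be a relational structure with domain $\Sigma$. For every $n\ge1$ and every relation $R\subseteq(\Sigma^* )^n$, $R$ is $MSO(\mathfrak M)$-definable if and only if the relation $\mu(R)=\{(\mu(w_1),\dots,\mu(w_n)):(w_1,\dots,w_n)\in R\}$ admits a reduction sequence with respect to $\mathfrak M_\#$ and $\mathfrak S_{<\omega}$.
   Context: Let $\mathfrak L$ be a relational language and $\mathfrak M$ an $\mathfrak L$-structure with domain $\Sigma$. Let $\#\notin\Sigma$ and let $\mathfrak M_\#$ be the $\mathfrak L_\#=\mathfrak L\cup\{P_\#\}$-structure with domain $\Sigma\cup\{\#\}$, every symbol of $\mathfrak L$ interpreted as in $\mathfrak M$ and $P_\#(x)$ holding iff $x=\#$. $MSO(\mathfrak M)$-definability: for $w=(w_1,\dots,w_n)\in(\Sigma^* )^n$, $\langle w\rangle$ is the word over $(\Sigma\cup\{\#\})^n$ of length $\max_i|w_i|$ obtained by right-padding each $w_i$ with $\#$'s and reading them in parallel; $\pi_j(\langle w\rangle)$ is its $j$-th component and $u[i]$ the $i$-th letter of $u$ (from $0$). To each first-order $\mathfrak L_\#$-formula $F$ with at least one free variable associate a unary predicate $\alpha_F$; $MSO(\mathfrak L)$ is monadic second-order logic over $\{<\}\cup\{\alpha_F\}$. $R$ is $MSO(\mathfrak M)$-definable if there is an $MSO(\mathfrak L)$-sentence $\psi$ such that $w\in R$ iff $\psi$ holds in the structure with domain $D=\{0,\dots,|\langle w\rangle|-1\}$, natural order $<$, and, for each $F$ with $n$ free variables, $\alpha_F(x)$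 true iff $\mathfrak M_\#\models F(\pi_1(\langle w\rangle)[x],\dots,\pi_n(\langle w\rangle)[x])$. Weak power setting: let $W$ be the set of sequences $f:\omega\to\Sigma\cup\{\#\}$ with $f(i)\ne\#$ for only finitely many $i$. For $w\in\Sigma^*$, $\mu(w)\in W$ is the sequence $w\#^\omega$. $\mathfrak S_{<\omega}=(S^+(\omega);\subseteq,\ll)$ where $S^+(\omega)$ is the set of finite subsets of $\omega$, $\subseteq$ is inclusion, and $X\ll Y$ iff $X=\{m\}$, $Y=\{k\}$ with $m<k$. A relation $P\subseteq W^n$ admits a reduction sequence with respect to $\mathfrak M_\#$ and $\mathfrak S_{<\omega}$ if there are a first-order formula $G(X_1,\dots,X_l)$ in the language $\{\subseteq,\ll\}$ and first-order $\mathfrak L_\#$-formulas $\theta_1,\dots,\theta_l$ with $n$ free variables, such that $\mathfrak M_\#\models\neg\theta_i(\#,\dots,\#)$ for every $i$, and for every $(f_1,\dots,f_n)\in W^n$: $(f_1,\dots,f_n)\in P$ iff $\mathfrak S_{<\omega}\models G(T_1,\dots,T_l)$ where $T_i=\{x\in\omega:\mathfrak M_\#\models\theta_i(f_1(x),\dots,f_n(x))\}$. *)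

theory Defs
  imports Main
begin

text \<open>The domain \<Sigma> of the structure M is modelled by a type 's; the extended domain
  \<Sigma> \<union> {#} is 's option, with None playing the role of #.
  A relational language is a type 'r of relation symbols with arities ar :: 'r \<Rightarrow> nat,
  and M interprets each symbol r by the relation I r (on lists of length ar r).\<close>

section \<open>First-order logic over L_# = L \<union> {P_#}, evaluated in M_#\<close>

datatype 'r fo =
    FRel 'r "nat list"
  | FHash nat
  | FEq nat nat
  | FNeg "'r fo"
  | FConj "'r fo" "'r fo"
  | FEx nat "'r fo"

fun fo_sat :: "('r \<Rightarrow> nat) \<Rightarrow> ('r \<Rightarrow> 's list \<Rightarrow> bool) \<Rightarrow> 'r fo \<Rightarrow> (nat \<Rightarrow> 's option) \<Rightarrow> bool" where
  "fo_sat ar I (FRel r vs) e =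
     (length vs = ar r \<and> (\<forall>v\<in>set vs. e v \<noteq> None) \<and> I r (map (\<lambda>v. the (e v)) vs))"
| "fo_sat ar I (FHash v) e = (e v = None)"
| "fo_sat ar I (FEq u v) e = (e u = e v)"
| "fo_sat ar I (FNeg F) e = (\<not> fo_sat ar I F e)"
| "fo_sat ar I (FConj F G) e = (fo_sat ar I F e \<and> fo_sat ar I G e)"
| "fo_sat ar I (FEx v F) e = (\<exists>a. fo_sat ar I F (e(v := a)))"

fun fo_fv :: "'r fo \<Rightarrow> nat set" where
  "fo_fv (FRel r vs) = set vs"
| "fo_fv (FHash v) = {v}"
| "fo_fv (FEq u v) = {u, v}"
| "fo_fv (FNeg F) = fo_fv F"
| "fo_fv (FConj F G) = fo_fv F \<union> fo_fv G"
| "fo_fv (FEx v F) = fo_fv F - {v}"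

definition mu :: "'s list \<Rightarrow> nat \<Rightarrow> 's option" where
  "mu w = (\<lambda>i. if i < length w then Some (w ! i) else None)"

definition conv_len :: "'s list list \<Rightarrow> nat" where
  "conv_len ws = foldr max (map length ws) 0"

text \<open>The letter of <w> at position x, i.e. (pi_1(<w>)[x], ..., pi_n(<w>)[x]),
  as an assignment of the first-order variables 0..n-1; other variables get #.\<close>
definition conv_letter :: "'s list list \<Rightarrow> nat \<Rightarrow> nat \<Rightarrow> 's option" where
  "conv_letter ws x = (\<lambda>j. if j < length ws then mu (ws ! j) x else None)"

datatype 'r mso =
    MLess nat nat
  | MAlpha "'r fo" nat
  | MIn nat nat
  | MNeg "'r mso"
  | MConj "'r mso" "'r mso"
  | MEx1 nat "'r mso"
  | MEx2 nat "'r mso"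

fun mso_sat :: "('r \<Rightarrow> nat) \<Rightarrow> ('r \<Rightarrow> 's list \<Rightarrow> bool) \<Rightarrow> 's list list \<Rightarrow> 'r mso
    \<Rightarrow> (nat \<Rightarrow> nat) \<Rightarrow> (nat \<Rightarrow> nat set) \<Rightarrow> bool" where
  "mso_sat ar I ws (MLess x y) e1 e2 = (e1 x < e1 y)"
| "mso_sat ar I ws (MAlpha F x) e1 e2 = fo_sat ar I F (conv_letter ws (e1 x))"
| "mso_sat ar I ws (MIn x X) e1 e2 = (e1 x \<in> e2 X)"
| "mso_sat ar I ws (MNeg \<phi>) e1 e2 = (\<not> mso_sat ar I ws \<phi> e1 e2)"
| "mso_sat ar I ws (MConj \<phi> \<psi>) e1 e2 = (mso_sat ar I ws \<phi> e1 e2 \<and> mso_sat ar I ws \<psi> e1 e2)"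
| "mso_sat ar I ws (MEx1 x \<phi>) e1 e2 = (\<exists>p < conv_len ws. mso_sat ar I ws \<phi> (e1(x := p)) e2)"
| "mso_sat ar I ws (MEx2 X \<phi>) e1 e2 =
     (\<exists>S \<subseteq> {..<conv_len ws}. mso_sat ar I ws \<phi> e1 (e2(X := S)))"

fun mso_fv1 :: "'r mso \<Rightarrow> nat set" where
  "mso_fv1 (MLess x y) = {x, y}"
| "mso_fv1 (MAlpha F x) = {x}"
| "mso_fv1 (MIn x X) = {x}"
| "mso_fv1 (MNeg \<phi>) = mso_fv1 \<phi>"
| "mso_fv1 (MConj \<phi> \<psi>) = mso_fv1 \<phi> \<union> mso_fv1 \<psi>"
| "mso_fv1 (MEx1 x \<phi>) = mso_fv1 \<phi> - {x}"
| "mso_fv1 (MEx2 X \<phi>) = mso_fv1 \<phi>"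

fun mso_fv2 :: "'r mso \<Rightarrow> nat set" where
  "mso_fv2 (MLess x y) = {}"
| "mso_fv2 (MAlpha F x) = {}"
| "mso_fv2 (MIn x X) = {X}"
| "mso_fv2 (MNeg \<phi>) = mso_fv2 \<phi>"
| "mso_fv2 (MConj \<phi> \<psi>) = mso_fv2 \<phi> \<union> mso_fv2 \<psi>"
| "mso_fv2 (MEx1 x \<phi>) = mso_fv2 \<phi>"
| "mso_fv2 (MEx2 X \<phi>) = mso_fv2 \<phi> - {X}"

fun mso_alphas :: "'r mso \<Rightarrow> 'r fo set" where
  "mso_alphas (MLess x y) = {}"
| "mso_alphas (MAlpha F x) = {F}"
| "mso_alphas (MIn x X) = {}"
| "mso_alphas (MNeg \<phi>) = mso_alphas \<phi>"
| "mso_alphas (MConj \<phi> \<psi>) = mso_alphas \<phi> \<union> mso_alphas \<psi>"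
| "mso_alphas (MEx1 x \<phi>) = mso_alphas \<phi>"
| "mso_alphas (MEx2 X \<phi>) = mso_alphas \<phi>"

definition mso_definable ::
    "('r \<Rightarrow> nat) \<Rightarrow> ('r \<Rightarrow> 's list \<Rightarrow> bool) \<Rightarrow> nat \<Rightarrow> 's list list set \<Rightarrow> bool" where
  "mso_definable ar I n R \<longleftrightarrow>
     (\<exists>\<psi> :: 'r mso. mso_fv1 \<psi> = {} \<and> mso_fv2 \<psi> = {} \<and>
        (\<forall>F\<in>mso_alphas \<psi>. fo_fv F \<noteq> {} \<and> fo_fv F \<subseteq> {..<n}) \<and>
        (\<forall>ws. length ws = n \<longrightarrow> (ws \<in> R \<longleftrightarrow> mso_sat ar I ws \<psi> (\<lambda>_. 0) (\<lambda>_. {}))))"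

section \<open>The weak power setting and S_<omega = (finite subsets of omega; \<subseteq>, <<)\<close>

definition in_W :: "(nat \<Rightarrow> 's option) \<Rightarrow> bool" where
  "in_W f \<longleftrightarrow> finite {i. f i \<noteq> None}"

datatype sfo =
    SSub nat nat
  | SLL nat nat
  | SNeg sfo
  | SConj sfo sfo
  | SEx nat sfo

fun sfo_sat :: "sfo \<Rightarrow> (nat \<Rightarrow> nat set) \<Rightarrow> bool" where
  "sfo_sat (SSub X Y) e = (e X \<subseteq> e Y)"
| "sfo_sat (SLL X Y) e = (\<exists>m k. e X = {m} \<and> e Y = {k} \<and> m < k)"
| "sfo_sat (SNeg G) e = (\<not> sfo_sat G e)"
| "sfo_sat (SConj G H) e = (sfo_sat G e \<and> sfo_sat H e)"
| "sfo_sat (SEx X G) e = (\<exists>S. finite S \<and> sfo_sat G (e(X := S)))"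

fun sfo_fv :: "sfo \<Rightarrow> nat set" where
  "sfo_fv (SSub X Y) = {X, Y}"
| "sfo_fv (SLL X Y) = {X, Y}"
| "sfo_fv (SNeg G) = sfo_fv G"
| "sfo_fv (SConj G H) = sfo_fv G \<union> sfo_fv H"
| "sfo_fv (SEx X G) = sfo_fv G - {X}"

definition admits_reduction_sequence ::
    "('r \<Rightarrow> nat) \<Rightarrow> ('r \<Rightarrow> 's list \<Rightarrow> bool) \<Rightarrow> nat \<Rightarrow> (nat \<Rightarrow> 's option) list set \<Rightarrow> bool" where
  "admits_reduction_sequence ar I n P \<longleftrightarrow>
     (\<exists>(G :: sfo) (\<theta>s :: 'r fo list).
        sfo_fv G \<subseteq> {..<length \<theta>s} \<and>
        (\<forall>\<theta>\<in>set \<theta>s. fo_fv \<theta> \<noteq> {} \<and> fo_fv \<theta> \<subseteq> {..<n} \<and> \<not> fo_sat ar I \<theta> (\<lambda>_. None)) \<and>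
        (\<forall>fs. length fs = n \<longrightarrow> (\<forall>f\<in>set fs. in_W f) \<longrightarrow>
           (fs \<in> P \<longleftrightarrow>
            sfo_sat G (\<lambda>i. if i < length \<theta>s then
                 {x. fo_sat ar I (\<theta>s ! i) (\<lambda>j. if j < n then (fs ! j) x else None)}
               else {}))))"

end

theory Submission
  imports Defs
begin

text \<open>
  Under a choice of \<open>\<theta>\<^sub>0, \<dots>, \<theta>\<^sub>l\<^sub>-\<^sub>1\<close>, a tuple of words becomes a word over the alphabet of
  subsets of \<open>{0, \<dots>, l - 1}\<close> whose \<open>i\<close>-th track is the set \<open>T\<^sub>i\<close> defined by \<open>\<theta>\<^sub>i\<close>; both
  directions are statements about such words.

  From a reduction sequence to a sentence: the formula \<open>G\<close> over finite sets of naturals defines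
  a language of these words, and this language is regular, i.e. has finitely many residuals.
  Atomic formulas are easily checked, regular languages are closed under Boolean operations, and
  \<open>\<exists>X\<close> only re-chooses one track, which a subset construction handles. An MSO-sentence can
  therefore guess a run of the residual automaton with set variables, since the letter read at a
  position is a Boolean combination of the \<open>\<theta>\<^sub>i\<close>, hence again a first-order \<open>L\<^sub>#\<close>-formula.
  That no \<open>\<theta>\<^sub>i\<close> holds of \<open>(#, \<dots>, #)\<close> confines every \<open>T\<^sub>i\<close> to the positions of the convolution.

  From a sentence to a reduction sequence: an MSO-sentence translates directly into a first-order
  formula over finite sets, positions becoming singletons and set variables finite subsets of the
  set of positions of the convolution, which is one more \<open>\<theta>\<close>; so is the set defined by each
  \<open>\<alpha>\<^sub>F\<close>. One further conjunct says that the support of every component is an initial segment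
  of \<open>\<omega>\<close>, which singles out the tuples of sequences of the form \<open>\<mu>(w)\<close>.
\<close>

section \<open>Languages defined by formulas over finite sets are regular\<close>

definition residual :: "'a list set \<Rightarrow> 'a list \<Rightarrow> 'a list set" where
  "residual L u = {v. u @ v \<in> L}"

definition regular :: "'a list set \<Rightarrow> bool" where
  "regular L \<longleftrightarrow> finite (range (residual L))"

lemma residual_append: "residual L (u @ v) = residual (residual L u) v"
  by (simp add: residual_def)

lemma regularI:
  assumes "finite (range h)" and "\<And>u u'. h u = h u' \<Longrightarrow> residual L u = residual L u'"
  shows "regular L"
proof -
  have "residual L u = residual L (inv h (h u))" for u
    by (rule assms(2)) (simp add: f_inv_into_f)
  then have "range (residual L) \<subseteq> (\<lambda>q. residual L (inv h q)) ` range h"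
    by blast
  then show ?thesis
    unfolding regular_def using assms(1) by (meson finite_imageI finite_subset)
qed

lemma regular_Compl: "regular L \<Longrightarrow> regular (- L)"
proof -
  have "range (residual (- L)) = uminus ` range (residual L)"
    by (auto simp: residual_def)
  then show "regular L \<Longrightarrow> regular (- L)"
    by (simp add: regular_def)
qed

lemma regular_Int: "regular L \<Longrightarrow> regular M \<Longrightarrow> regular (L \<inter> M)"
proof -
  have "range (residual (L \<inter> M)) \<subseteq> case_prod (\<inter>) ` (range (residual L) \<times> range (residual M))"
    by (auto simp: residual_def image_iff)
  then show "regular L \<Longrightarrow> regular M \<Longrightarrow> regular (L \<inter> M)"
    unfolding regular_def by (meson finite_SigmaI finite_imageI finite_subset)
qed

definition track :: "nat set list \<Rightarrow> nat \<Rightarrow> nat set" where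
  "track u i = {p. p < length u \<and> i \<in> u ! p}"

definition sfo_lang :: "sfo \<Rightarrow> nat set list set" where
  "sfo_lang G = {u. sfo_sat G (track u)}"

lemma finite_track: "finite (track u i)"
  by (simp add: track_def)

lemma track_less: "p \<in> track u i \<Longrightarrow> p < length u"
  by (simp add: track_def)

lemma track_append: "track (u @ v) i = track u i \<union> (\<lambda>p. p + length u) ` track v i"
proof (rule set_eqI)
  fix x
  show "x \<in> track (u @ v) i \<longleftrightarrow> x \<in> track u i \<union> (\<lambda>p. p + length u) ` track v i"
  proof (cases "x < length u")
    case False
    then obtain q where "x = q + length u"
      by (metis add.commute le_Suc_ex not_less)
    with False show ?thesis by (auto simp: track_def nth_append)
  qed (auto simp: track_def nth_append)
qed

lemma regular_sfo_lang_SSub: "regular (sfo_lang (SSub X Y))"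
proof -
  have L: "sfo_lang (SSub X Y) = {u. list_all (\<lambda>a. X \<in> a \<longrightarrow> Y \<in> a) u}"
    by (auto simp: sfo_lang_def track_def list_all_length)
  show ?thesis unfolding L
    by (rule regularI[where h = "list_all (\<lambda>a. X \<in> a \<longrightarrow> Y \<in> a)"]) (auto simp: residual_def)
qed

lemma singleton_Un_shift:
  fixes A B :: "nat set"
  assumes below: "\<forall>p\<in>A. p < c"
  shows "A \<union> (\<lambda>p. p + c) ` B = {m} \<longleftrightarrow>
    (A = {m} \<and> B = {}) \<or> (A = {} \<and> (\<exists>m'. B = {m'} \<and> m = m' + c))"
proof
  assume h: "A \<union> (\<lambda>p. p + c) ` B = {m}"
  then have shifted: "b + c = m" if "b \<in> B" for b
    using that by blast
  show "(A = {m} \<and> B = {}) \<or> (A = {} \<and> (\<exists>m'. B = {m'} \<and> m = m' + c))"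
  proof (cases "m < c")
    case True
    then have "B = {}"
      using shifted by fastforce
    with h show ?thesis by simp
  next
    case False
    have "A \<subseteq> {m}"
      using h by blast
    then have "A = {}"
      using False below by auto
    then obtain m' where "m' \<in> B" "m = m' + c"
      using h by (metis UnE imageE insertI1 empty_iff)
    moreover have "B \<subseteq> {m'}"
      using shifted \<open>m = m' + c\<close> by auto
    ultimately show ?thesis
      using \<open>A = {}\<close> by blast
  qed
next
  assume "(A = {m} \<and> B = {}) \<or> (A = {} \<and> (\<exists>m'. B = {m'} \<and> m = m' + c))"
  then show "A \<union> (\<lambda>p. p + c) ` B = {m}"
    by (elim disjE conjE exE) simp_all
qed

lemma ordered_singletons_Un_shift:
  fixes A B C D :: "nat set"
  assumes "\<forall>p\<in>A. p < c" "\<forall>p\<in>C. p < c"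
  shows "(\<exists>m k. A \<union> (\<lambda>p. p + c) ` B = {m} \<and> C \<union> (\<lambda>p. p + c) ` D = {k} \<and> m < k) \<longleftrightarrow>
    ((\<exists>m k. A = {m} \<and> C = {k} \<and> m < k) \<and> B = {} \<and> D = {}) \<or>
    ((\<exists>m. A = {m}) \<and> C = {} \<and> B = {} \<and> (\<exists>k. D = {k})) \<or>
    (A = {} \<and> C = {} \<and> (\<exists>m k. B = {m} \<and> D = {k} \<and> m < k))"
  unfolding singleton_Un_shift[OF assms(1)] singleton_Un_shift[OF assms(2)]
proof
  assume "\<exists>m k. (A = {m} \<and> B = {} \<or> A = {} \<and> (\<exists>m'. B = {m'} \<and> m = m' + c)) \<and>
    (C = {k} \<and> D = {} \<or> C = {} \<and> (\<exists>k'. D = {k'} \<and> k = k' + c)) \<and> m < k"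
  then obtain m k where "A = {m} \<and> B = {} \<or> A = {} \<and> (\<exists>m'. B = {m'} \<and> m = m' + c)"
      "C = {k} \<and> D = {} \<or> C = {} \<and> (\<exists>k'. D = {k'} \<and> k = k' + c)" "m < k"
    by blast
  then show "((\<exists>m k. A = {m} \<and> C = {k} \<and> m < k) \<and> B = {} \<and> D = {}) \<or>
      ((\<exists>m. A = {m}) \<and> C = {} \<and> B = {} \<and> (\<exists>k. D = {k})) \<or>
      (A = {} \<and> C = {} \<and> (\<exists>m k. B = {m} \<and> D = {k} \<and> m < k))"
    using assms by (elim disjE conjE exE) auto
qed (use assms in \<open>elim disjE conjE exE; force\<close>)

lemma regular_sfo_lang_SLL: "regular (sfo_lang (SLL X Y))"
proof -
  define L where "L = sfo_lang (SLL X Y)"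
  have L: "u \<in> L \<longleftrightarrow> (\<exists>m k. track u X = {m} \<and> track u Y = {k} \<and> m < k)" for u
    by (simp add: L_def sfo_lang_def)
  have append_in_L: "u @ v \<in> L \<longleftrightarrow>
      (u \<in> L \<and> track v X = {} \<and> track v Y = {}) \<or>
      ((\<exists>m. track u X = {m}) \<and> track u Y = {} \<and> track v X = {} \<and> (\<exists>k. track v Y = {k})) \<or>
      (track u X = {} \<and> track u Y = {} \<and> v \<in> L)" for u v
    unfolding L track_append by (rule ordered_singletons_Un_shift) (use track_less in blast)+
  define h where
    "h u = (u \<in> L, track u X = {}, track u Y = {}, \<exists>m. track u X = {m}, \<exists>k. track u Y = {k})" for u
  show ?thesis unfolding L_def[symmetric]
  proof (rule regularI[where h = h])
    fix u u' :: "nat set list"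
    assume "h u = h u'"
    then have "u @ v \<in> L \<longleftrightarrow> u' @ v \<in> L" for v
      unfolding h_def append_in_L prod.inject by (simp only:)
    then show "residual L u = residual L u'"
      by (simp add: residual_def)
  qed (rule finite_subset[OF subset_UNIV], simp)
qed

definition agree_off :: "nat \<Rightarrow> nat set \<Rightarrow> nat set \<Rightarrow> bool" where
  "agree_off Y a b \<longleftrightarrow> a - {Y} = b - {Y}"

lemma track_agree_off:
  assumes "list_all2 (agree_off Y) (u @ replicate k {}) w"
  shows "track w = (track u)(Y := track w Y)"
proof
  fix i
  have len: "length w = length u + k"
    using assms list_all2_lengthD by fastforce
  show "track w i = ((track u)(Y := track w Y)) i"
  proof (cases "i = Y")
    case False
    have "i \<in> w ! p \<longleftrightarrow> p < length u \<and> i \<in> u ! p" if "p < length w" for p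
    proof -
      have "agree_off Y ((u @ replicate k {}) ! p) (w ! p)"
        using assms that list_all2_nthD2 by blast
      then have "i \<in> w ! p \<longleftrightarrow> i \<in> (u @ replicate k {}) ! p"
        using False unfolding agree_off_def by blast
      then show ?thesis
        using that len by (auto simp: nth_append)
    qed
    then show ?thesis
      using False len by (auto simp: track_def)
  qed simp
qed

lemma sfo_sat_SEx_track:
  "sfo_sat (SEx Y G) (track u) \<longleftrightarrow>
    (\<exists>k w. list_all2 (agree_off Y) (u @ replicate k {}) w \<and> w \<in> sfo_lang G)"
proof
  assume "\<exists>k w. list_all2 (agree_off Y) (u @ replicate k {}) w \<and> w \<in> sfo_lang G"
  then obtain k w where "list_all2 (agree_off Y) (u @ replicate k {}) w" "w \<in> sfo_lang G"
    by blast
  then show "sfo_sat (SEx Y G) (track u)"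
    using track_agree_off finite_track unfolding sfo_lang_def
    by (metis mem_Collect_eq sfo_sat.simps(5))
next
  assume "sfo_sat (SEx Y G) (track u)"
  then obtain S where S: "finite S" "sfo_sat G ((track u)(Y := S))"
    by auto
  define len where "len = max (length u) (if S = {} then 0 else Suc (Max S))"
  define k where "k = len - length u"
  define w where
    "w = map (\<lambda>p. ((u @ replicate k {}) ! p - {Y}) \<union> (if p \<in> S then {Y} else {})) [0..<len]"
  have S_below: "p < len" if "p \<in> S" for p
    using Max_ge[OF S(1) that] that by (auto simp: len_def)
  have agree: "list_all2 (agree_off Y) (u @ replicate k {}) w"
    by (rule list_all2_all_nthI) (auto simp: w_def k_def len_def agree_off_def)
  have "track w Y = S"
    using S_below by (auto simp: track_def w_def split: if_splits)
  then have "track w = (track u)(Y := S)"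
    using track_agree_off[OF agree] by simp
  then show "\<exists>k w. list_all2 (agree_off Y) (u @ replicate k {}) w \<and> w \<in> sfo_lang G"
    using agree S(2) unfolding sfo_lang_def by (metis mem_Collect_eq)
qed

text \<open>A subset construction: a residual of \<open>SEx Y G\<close> is determined by the set of
  residuals of \<open>G\<close> reachable by re-choosing the \<open>Y\<close>-track.\<close>

lemma regular_sfo_lang_SEx:
  assumes "regular (sfo_lang G)"
  shows "regular (sfo_lang (SEx Y G))"
proof -
  define L where "L = sfo_lang G"
  have in_SEx: "u \<in> sfo_lang (SEx Y G) \<longleftrightarrow>
      (\<exists>k w. list_all2 (agree_off Y) (u @ replicate k {}) w \<and> w \<in> L)" for u
    using sfo_sat_SEx_track[of Y G u] by (simp add: sfo_lang_def L_def)
  define h where "h u = {residual L w | w. list_all2 (agree_off Y) u w}" for u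
  have append_in_SEx: "u @ v \<in> sfo_lang (SEx Y G) \<longleftrightarrow>
      (\<exists>M\<in>h u. \<exists>k w. list_all2 (agree_off Y) (v @ replicate k {}) w \<and> w \<in> M)" for u v
  proof
    assume "u @ v \<in> sfo_lang (SEx Y G)"
    then obtain k w where w: "list_all2 (agree_off Y) (u @ (v @ replicate k {})) w" "w \<in> L"
      unfolding in_SEx by auto
    then obtain w1 w2 where "w = w1 @ w2" "list_all2 (agree_off Y) u w1"
        "list_all2 (agree_off Y) (v @ replicate k {}) w2"
      unfolding list_all2_append1 by blast
    with w(2) show "\<exists>M\<in>h u. \<exists>k w. list_all2 (agree_off Y) (v @ replicate k {}) w \<and> w \<in> M"
      unfolding h_def residual_def by blast
  next
    assume "\<exists>M\<in>h u. \<exists>k w. list_all2 (agree_off Y) (v @ replicate k {}) w \<and> w \<in> M"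
    then obtain w1 k w2 where "list_all2 (agree_off Y) u w1"
        "list_all2 (agree_off Y) (v @ replicate k {}) w2" "w1 @ w2 \<in> L"
      unfolding h_def residual_def by blast
    then show "u @ v \<in> sfo_lang (SEx Y G)"
      unfolding in_SEx using list_all2_appendI by fastforce
  qed
  show ?thesis
  proof (rule regularI[where h = h])
    have "range h \<subseteq> Pow (range (residual L))"
      by (auto simp: h_def)
    then show "finite (range h)"
      using assms unfolding regular_def L_def by (meson finite_Pow_iff finite_subset)
  qed (simp add: residual_def append_in_SEx)
qed

lemma regular_sfo_lang: "regular (sfo_lang G)"
proof (induction G)
  case (SNeg G)
  have "sfo_lang (SNeg G) = - sfo_lang G"
    by (auto simp: sfo_lang_def)
  with SNeg show ?case
    by (simp add: regular_Compl)
next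
  case (SConj G H)
  have "sfo_lang (SConj G H) = sfo_lang G \<inter> sfo_lang H"
    by (auto simp: sfo_lang_def)
  with SConj show ?case
    by (simp add: regular_Int)
qed (simp_all add: regular_sfo_lang_SSub regular_sfo_lang_SLL regular_sfo_lang_SEx)

section \<open>The residual automaton as an MSO sentence\<close>

definition fo_true :: "'r fo" where
  "fo_true = FEq 0 0"

definition fo_or :: "'r fo \<Rightarrow> 'r fo \<Rightarrow> 'r fo" where
  "fo_or F G = FNeg (FConj (FNeg F) (FNeg G))"

definition fo_conj_list :: "'r fo list \<Rightarrow> 'r fo" where
  "fo_conj_list Fs = foldr FConj Fs fo_true"

definition fo_disj_list :: "'r fo list \<Rightarrow> 'r fo" where
  "fo_disj_list Fs = foldr fo_or Fs (FNeg fo_true)"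

lemma fo_sat_conj_list [simp]:
  "fo_sat ar I (fo_conj_list Fs) e \<longleftrightarrow> (\<forall>F\<in>set Fs. fo_sat ar I F e)"
  by (induction Fs) (auto simp: fo_conj_list_def fo_true_def)

lemma fo_sat_disj_list [simp]:
  "fo_sat ar I (fo_disj_list Fs) e \<longleftrightarrow> (\<exists>F\<in>set Fs. fo_sat ar I F e)"
  by (induction Fs) (auto simp: fo_disj_list_def fo_true_def fo_or_def)

text \<open>Since \<open>fo_true\<close> is \<open>FEq 0 0\<close>, these formulas always mention variable 0; this is why
  \<open>n \<ge> 1\<close> is needed.\<close>

lemma fo_fv_conj_list [simp]: "fo_fv (fo_conj_list Fs) = insert 0 (\<Union> (fo_fv ` set Fs))"
  by (induction Fs) (auto simp: fo_conj_list_def fo_true_def)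

lemma fo_fv_disj_list [simp]: "fo_fv (fo_disj_list Fs) = insert 0 (\<Union> (fo_fv ` set Fs))"
  by (induction Fs) (auto simp: fo_disj_list_def fo_true_def fo_or_def)

definition satisfied_indices ::
    "('r \<Rightarrow> nat) \<Rightarrow> ('r \<Rightarrow> 's list \<Rightarrow> bool) \<Rightarrow> 'r fo list \<Rightarrow> (nat \<Rightarrow> 's option) \<Rightarrow> nat set" where
  "satisfied_indices ar I \<theta>s e = {i. i < length \<theta>s \<and> fo_sat ar I (\<theta>s ! i) e}"

definition letter_formula :: "'r fo list \<Rightarrow> nat set \<Rightarrow> 'r fo" where
  "letter_formula \<theta>s A =
     fo_conj_list (map (\<lambda>i. if i \<in> A then \<theta>s ! i else FNeg (\<theta>s ! i)) [0..<length \<theta>s])"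

lemma fo_sat_letter_formula:
  assumes "A \<subseteq> {..<length \<theta>s}"
  shows "fo_sat ar I (letter_formula \<theta>s A) e \<longleftrightarrow> A = satisfied_indices ar I \<theta>s e"
proof -
  have literal: "fo_sat ar I (if i \<in> A then \<theta>s ! i else FNeg (\<theta>s ! i)) e \<longleftrightarrow>
      (i \<in> A \<longleftrightarrow> fo_sat ar I (\<theta>s ! i) e)" for i
    by simp
  have "fo_sat ar I (letter_formula \<theta>s A) e \<longleftrightarrow>
      (\<forall>i<length \<theta>s. i \<in> A \<longleftrightarrow> fo_sat ar I (\<theta>s ! i) e)"
    unfolding letter_formula_def fo_sat_conj_list set_map Ball_image_comp comp_def literal
    by auto
  also have "\<dots> \<longleftrightarrow> A = satisfied_indices ar I \<theta>s e"
    using assms unfolding satisfied_indices_def by blast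
  finally show ?thesis .
qed

definition step_formula :: "'r fo list \<Rightarrow> nat set list set \<Rightarrow> nat set list set \<Rightarrow> 'r fo" where
  "step_formula \<theta>s q q' = fo_disj_list (map (letter_formula \<theta>s)
     (filter (\<lambda>A. residual q [A] = q') (map set (subseqs [0..<length \<theta>s]))))"

lemma fo_sat_step_formula:
  "fo_sat ar I (step_formula \<theta>s q q') e \<longleftrightarrow> residual q [satisfied_indices ar I \<theta>s e] = q'"
proof -
  let ?A = "satisfied_indices ar I \<theta>s e"
  have letters: "set ` set (subseqs [0..<length \<theta>s]) = Pow {..<length \<theta>s}"
    by (simp add: subseqs_powset atLeast0LessThan)
  have "fo_sat ar I (step_formula \<theta>s q q') e \<longleftrightarrow>
      (\<exists>A \<subseteq> {..<length \<theta>s}. residual q [A] = q' \<and> fo_sat ar I (letter_formula \<theta>s A) e)"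
    unfolding step_formula_def fo_sat_disj_list set_map set_filter letters by blast
  also have "\<dots> \<longleftrightarrow> residual q [?A] = q'"
  proof -
    have "?A \<subseteq> {..<length \<theta>s}"
      by (auto simp: satisfied_indices_def)
    then show ?thesis
      using fo_sat_letter_formula[of _ \<theta>s ar I e] by metis
  qed
  finally show ?thesis .
qed

lemma fo_fv_step_formula:
  "0 \<in> fo_fv (step_formula \<theta>s q q')"
  "fo_fv (step_formula \<theta>s q q') \<subseteq> insert 0 (\<Union> (fo_fv ` set \<theta>s))"
  by (auto simp: step_formula_def letter_formula_def)

definition mso_true :: "'r mso" where
  "mso_true = MNeg (MEx1 0 (MLess 0 0))"

definition mso_or :: "'r mso \<Rightarrow> 'r mso \<Rightarrow> 'r mso" where
  "mso_or \<phi> \<psi> = MNeg (MConj (MNeg \<phi>) (MNeg \<psi>))"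

definition mso_imp :: "'r mso \<Rightarrow> 'r mso \<Rightarrow> 'r mso" where
  "mso_imp \<phi> \<psi> = MNeg (MConj \<phi> (MNeg \<psi>))"

definition mso_all1 :: "nat \<Rightarrow> 'r mso \<Rightarrow> 'r mso" where
  "mso_all1 x \<phi> = MNeg (MEx1 x (MNeg \<phi>))"

definition mso_conj_list :: "'r mso list \<Rightarrow> 'r mso" where
  "mso_conj_list \<phi>s = foldr MConj \<phi>s mso_true"

definition mso_disj_list :: "'r mso list \<Rightarrow> 'r mso" where
  "mso_disj_list \<phi>s = foldr mso_or \<phi>s (MNeg mso_true)"

definition mso_ex2_list :: "nat list \<Rightarrow> 'r mso \<Rightarrow> 'r mso" where
  "mso_ex2_list Xs \<phi> = foldr MEx2 Xs \<phi>"

lemma mso_sat_connectives [simp]: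
  "mso_sat ar I ws mso_true e1 e2"
  "mso_sat ar I ws (mso_or \<phi> \<psi>) e1 e2 \<longleftrightarrow> mso_sat ar I ws \<phi> e1 e2 \<or> mso_sat ar I ws \<psi> e1 e2"
  "mso_sat ar I ws (mso_imp \<phi> \<psi>) e1 e2 \<longleftrightarrow> (mso_sat ar I ws \<phi> e1 e2 \<longrightarrow> mso_sat ar I ws \<psi> e1 e2)"
  "mso_sat ar I ws (mso_all1 x \<phi>) e1 e2 \<longleftrightarrow> (\<forall>p < conv_len ws. mso_sat ar I ws \<phi> (e1(x := p)) e2)"
  "mso_sat ar I ws (mso_conj_list \<phi>s) e1 e2 \<longleftrightarrow> (\<forall>\<phi>\<in>set \<phi>s. mso_sat ar I ws \<phi> e1 e2)"
  "mso_sat ar I ws (mso_disj_list \<phi>s) e1 e2 \<longleftrightarrow> (\<exists>\<phi>\<in>set \<phi>s. mso_sat ar I ws \<phi> e1 e2)"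
  by (simp_all add: mso_true_def mso_or_def mso_imp_def mso_all1_def)
    (induction \<phi>s; simp add: mso_conj_list_def mso_disj_list_def mso_true_def mso_or_def)+

lemma mso_sat_ex2_list:
  "mso_sat ar I ws (mso_ex2_list Xs \<phi>) e1 e2 \<longleftrightarrow>
    (\<exists>e2'. (\<forall>X\<in>set Xs. e2' X \<subseteq> {..<conv_len ws}) \<and> (\<forall>X. X \<notin> set Xs \<longrightarrow> e2' X = e2 X) \<and>
      mso_sat ar I ws \<phi> e1 e2')"
proof (induction Xs arbitrary: e2)
  case Nil
  then show ?case
    by (simp add: mso_ex2_list_def flip: fun_eq_iff)
next
  case (Cons X Xs)
  show ?case (is "?lhs \<longleftrightarrow> ?rhs")
  proof
    assume ?lhs
    then obtain S e2' where e2': "S \<subseteq> {..<conv_len ws}" "\<forall>Y\<in>set Xs. e2' Y \<subseteq> {..<conv_len ws}"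
        "\<forall>Y. Y \<notin> set Xs \<longrightarrow> e2' Y = (e2(X := S)) Y" "mso_sat ar I ws \<phi> e1 e2'"
      using Cons.IH by (auto simp: mso_ex2_list_def simp del: fun_upd_apply)
    moreover have "e2' X \<subseteq> {..<conv_len ws}"
      using e2'(1,2) e2'(3)[rule_format, of X] by (cases "X \<in> set Xs") auto
    ultimately show ?rhs
      by (intro exI[of _ e2']) auto
  next
    assume ?rhs
    then obtain e2' where e2': "\<forall>Y\<in>set (X # Xs). e2' Y \<subseteq> {..<conv_len ws}"
        "\<forall>Y. Y \<notin> set (X # Xs) \<longrightarrow> e2' Y = e2 Y" "mso_sat ar I ws \<phi> e1 e2'"
      by blast
    then have "mso_sat ar I ws (mso_ex2_list Xs \<phi>) e1 (e2(X := e2' X))"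
      unfolding Cons.IH by (intro exI[of _ e2']) auto
    with e2'(1) show ?lhs
      by (auto simp: mso_ex2_list_def)
  qed
qed

lemma mso_free_vars_connectives [simp]:
  "mso_fv1 (mso_true :: 'r mso) = {}"
  "mso_fv2 (mso_true :: 'r mso) = {}"
  "mso_alphas (mso_true :: 'r mso) = {}"
  "mso_fv1 (mso_or \<phi> \<psi>) = mso_fv1 \<phi> \<union> mso_fv1 \<psi>"
  "mso_fv2 (mso_or \<phi> \<psi>) = mso_fv2 \<phi> \<union> mso_fv2 \<psi>"
  "mso_alphas (mso_or \<phi> \<psi>) = mso_alphas \<phi> \<union> mso_alphas \<psi>"
  "mso_fv1 (mso_imp \<phi> \<psi>) = mso_fv1 \<phi> \<union> mso_fv1 \<psi>"
  "mso_fv2 (mso_imp \<phi> \<psi>) = mso_fv2 \<phi> \<union> mso_fv2 \<psi>"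
  "mso_alphas (mso_imp \<phi> \<psi>) = mso_alphas \<phi> \<union> mso_alphas \<psi>"
  "mso_fv1 (mso_all1 x \<phi>) = mso_fv1 \<phi> - {x}"
  "mso_fv2 (mso_all1 x \<phi>) = mso_fv2 \<phi>"
  "mso_alphas (mso_all1 x \<phi>) = mso_alphas \<phi>"
  "mso_fv1 (mso_conj_list \<phi>s) = \<Union> (mso_fv1 ` set \<phi>s)"
  "mso_fv2 (mso_conj_list \<phi>s) = \<Union> (mso_fv2 ` set \<phi>s)"
  "mso_alphas (mso_conj_list \<phi>s) = \<Union> (mso_alphas ` set \<phi>s)"
  "mso_fv1 (mso_disj_list \<phi>s) = \<Union> (mso_fv1 ` set \<phi>s)"
  "mso_fv2 (mso_disj_list \<phi>s) = \<Union> (mso_fv2 ` set \<phi>s)"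
  "mso_alphas (mso_disj_list \<phi>s) = \<Union> (mso_alphas ` set \<phi>s)"
  by (simp_all add: mso_true_def mso_or_def mso_imp_def mso_all1_def)
    (induction \<phi>s; simp add: mso_conj_list_def mso_disj_list_def mso_true_def mso_or_def)+

lemma mso_free_vars_ex2_list [simp]:
  "mso_fv1 (mso_ex2_list Xs \<phi>) = mso_fv1 \<phi>" "mso_fv2 (mso_ex2_list Xs \<phi>) = mso_fv2 \<phi> - set Xs"
  "mso_alphas (mso_ex2_list Xs \<phi>) = mso_alphas \<phi>"
  by (induction Xs) (auto simp: mso_ex2_list_def)

text \<open>States are indices into the list \<open>qs\<close> of the residuals of \<open>L\<close>; position \<open>p\<close> carries the
  state reached after reading \<open>a 0 \<dots> a p\<close>.\<close>

definition is_run ::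
    "'a list set list \<Rightarrow> 'a list set \<Rightarrow> (nat \<Rightarrow> 'a) \<Rightarrow> nat \<Rightarrow> (nat \<Rightarrow> nat) \<Rightarrow> bool" where
  "is_run qs L a N st \<longleftrightarrow>
     (\<forall>p<N. st p < length qs) \<and>
     (0 < N \<longrightarrow> qs ! st 0 = residual L [a 0]) \<and>
     (\<forall>p. Suc p < N \<longrightarrow> qs ! st (Suc p) = residual (qs ! st p) [a (Suc p)]) \<and>
     (0 < N \<longrightarrow> [] \<in> qs ! st (N - 1))"

lemma residual_upt_Suc:
  "residual L (map a [0..<Suc (Suc p)]) = residual (residual L (map a [0..<Suc p])) [a (Suc p)]"
  using residual_append[of L "map a [0..<Suc p]" "[a (Suc p)]"] by simp

lemma is_run_state:
  assumes "is_run qs L a N st" "p < N"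
  shows "qs ! st p = residual L (map a [0..<Suc p])"
  using assms(2)
proof (induction p)
  case 0
  with assms(1) show ?case
    by (simp add: is_run_def)
next
  case (Suc p)
  with assms(1) show ?case
    unfolding is_run_def residual_upt_Suc by simp
qed

lemma ex_run_iff:
  assumes "set qs = range (residual L)"
  shows "(\<exists>st. is_run qs L a N st) \<longleftrightarrow> (0 < N \<longrightarrow> map a [0..<N] \<in> L)"
proof
  assume "\<exists>st. is_run qs L a N st"
  then obtain st where run: "is_run qs L a N st"
    by blast
  show "0 < N \<longrightarrow> map a [0..<N] \<in> L"
  proof
    assume "0 < N"
    then have "[] \<in> qs ! st (N - 1)" "qs ! st (N - 1) = residual L (map a [0..<N])"
      using run is_run_state[OF run, of "N - 1"] by (simp_all add: is_run_def)
    then have "[] \<in> residual L (map a [0..<N])"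
      by simp
    then show "map a [0..<N] \<in> L"
      by (simp add: residual_def)
  qed
next
  assume accepted: "0 < N \<longrightarrow> map a [0..<N] \<in> L"
  define st where "st p = (SOME i. i < length qs \<and> qs ! i = residual L (map a [0..<Suc p]))" for p
  have st: "st p < length qs \<and> qs ! st p = residual L (map a [0..<Suc p])" for p
  proof -
    have "residual L (map a [0..<Suc p]) \<in> set qs"
      using assms by simp
    then obtain i where "i < length qs \<and> qs ! i = residual L (map a [0..<Suc p])"
      by (auto simp: in_set_conv_nth)
    then show ?thesis
      unfolding st_def by (rule someI)
  qed
  have "is_run qs L a N st"
    unfolding is_run_def
  proof (intro conjI allI impI)
    show "st p < length qs" for p
      using st by blast
    show "qs ! st 0 = residual L [a 0]"
      using st[of 0] by simp
    show "qs ! st (Suc p) = residual (qs ! st p) [a (Suc p)]" for p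
      using st[of p] st[of "Suc p"] by (simp only: residual_upt_Suc)
    assume "0 < N"
    then have "qs ! st (N - 1) = residual L (map a [0..<N])"
      using st[of "N - 1"] by simp
    with \<open>0 < N\<close> accepted show "[] \<in> qs ! st (N - 1)"
      by (simp add: residual_def)
  qed
  then show "\<exists>st. is_run qs L a N st"
    by blast
qed

text \<open>A position may carry several labels, but they are then forced to denote the same state.\<close>

definition is_run_cover ::
    "'a list set list \<Rightarrow> 'a list set \<Rightarrow> (nat \<Rightarrow> 'a) \<Rightarrow> nat \<Rightarrow> (nat \<Rightarrow> nat set) \<Rightarrow> bool" where
  "is_run_cover qs L a N Q \<longleftrightarrow>
     (\<forall>p<N. \<exists>i<length qs. p \<in> Q i) \<and>
     (0 < N \<longrightarrow> (\<forall>i<length qs. 0 \<in> Q i \<longrightarrow> residual L [a 0] = qs ! i)) \<and>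
     (\<forall>p. Suc p < N \<longrightarrow> (\<forall>i<length qs. \<forall>j<length qs. p \<in> Q i \<and> Suc p \<in> Q j \<longrightarrow>
        residual (qs ! i) [a (Suc p)] = qs ! j)) \<and>
     (0 < N \<longrightarrow> (\<exists>i<length qs. [] \<in> qs ! i \<and> N - 1 \<in> Q i))"

lemma is_run_cover_of_run:
  assumes "is_run qs L a N st"
  shows "is_run_cover qs L a N (\<lambda>i. if i < length qs then {p. p < N \<and> st p = i} else Q i)"
  using assms unfolding is_run_def is_run_cover_def by auto

lemma ex_run_of_run_cover:
  assumes "is_run_cover qs L a N Q"
  shows "\<exists>st. is_run qs L a N st"
proof -
  define st where "st p = (SOME i. i < length qs \<and> p \<in> Q i)" for p
  have st: "st p < length qs \<and> p \<in> Q (st p)" if "p < N" for p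
    using assms that unfolding is_run_cover_def st_def by (metis (mono_tags, lifting) someI_ex)
  have agree: "qs ! i = qs ! st p" if "p < N" "i < length qs" "p \<in> Q i" for p i
  proof (cases p)
    case 0
    with assms that st[of 0] show ?thesis
      unfolding is_run_cover_def by metis
  next
    case (Suc p')
    with assms that st[of p'] st[of p] show ?thesis
      unfolding is_run_cover_def by (metis Suc_lessD)
  qed
  have "is_run qs L a N st"
    unfolding is_run_def
  proof (intro conjI allI impI)
    show "st p < length qs" if "p < N" for p
      using st that by blast
    show "qs ! st 0 = residual L [a 0]" if "0 < N"
      using assms st[OF that] that unfolding is_run_cover_def by metis
    show "qs ! st (Suc p) = residual (qs ! st p) [a (Suc p)]" if "Suc p < N" for p
      using assms st[of p] st[OF that] that unfolding is_run_cover_def by (metis Suc_lessD)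
    show "[] \<in> qs ! st (N - 1)" if "0 < N"
      using assms agree[of "N - 1"] that unfolding is_run_cover_def by fastforce
  qed
  then show ?thesis
    by blast
qed

abbreviation theta_letter ::
    "('r \<Rightarrow> nat) \<Rightarrow> ('r \<Rightarrow> 's list \<Rightarrow> bool) \<Rightarrow> 'r fo list \<Rightarrow> 's list list \<Rightarrow> nat \<Rightarrow> nat set" where
  "theta_letter ar I \<theta>s ws p \<equiv> satisfied_indices ar I \<theta>s (conv_letter ws p)"

definition theta_word ::
    "('r \<Rightarrow> nat) \<Rightarrow> ('r \<Rightarrow> 's list \<Rightarrow> bool) \<Rightarrow> 'r fo list \<Rightarrow> 's list list \<Rightarrow> nat set list" where
  "theta_word ar I \<theta>s ws = map (theta_letter ar I \<theta>s ws) [0..<conv_len ws]"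

lemma all_least_below_iff:
  fixes N :: nat
  shows "(\<forall>p<N. \<not> (\<exists>q<N. q < p) \<longrightarrow> P p) \<longleftrightarrow> (0 < N \<longrightarrow> P 0)"
proof -
  have "\<not> (\<exists>q<N. q < p) \<longleftrightarrow> p = 0" if "p < N" for p
    using that by auto
  then show ?thesis
    by auto
qed

lemma all_greatest_below_iff:
  fixes N :: nat
  shows "(\<forall>p<N. \<not> (\<exists>q<N. p < q) \<longrightarrow> P p) \<longleftrightarrow> (0 < N \<longrightarrow> P (N - 1))"
proof -
  have last: "\<not> (\<exists>q<N. p < q) \<longleftrightarrow> p = N - 1" if "p < N" for p
    using that by presburger
  show ?thesis
  proof (intro iffI impI allI)
    assume "\<forall>p<N. \<not> (\<exists>q<N. p < q) \<longrightarrow> P p" and "0 < N"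
    with last[of "N - 1"] show "P (N - 1)"
      by simp
  next
    fix p
    assume "0 < N \<longrightarrow> P (N - 1)" and "p < N" and "\<not> (\<exists>q<N. p < q)"
    with last[of p] show "P p"
      by simp
  qed
qed

lemma all_immediate_successor_below_iff:
  fixes N :: nat
  shows "(\<forall>p<N. \<forall>p'<N. p < p' \<and> \<not> (\<exists>r<N. p < r \<and> r < p') \<longrightarrow> P p p') \<longleftrightarrow>
    (\<forall>p. Suc p < N \<longrightarrow> P p (Suc p))"
proof -
  have "p < p' \<and> \<not> (\<exists>r<N. p < r \<and> r < p') \<longleftrightarrow> p' = Suc p" if "p' < N" for p p'
    using that by auto
  then show ?thesis
    by (metis Suc_lessD)
qed

text \<open>In the following formulas the set variable \<open>i\<close> collects the positions labelled with
  the state \<open>qs ! i\<close>.\<close>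

definition cover_formula :: "nat \<Rightarrow> 'r mso" where
  "cover_formula K = mso_all1 0 (mso_disj_list (map (MIn 0) [0..<K]))"

definition initial_formula :: "'r fo list \<Rightarrow> nat set list set \<Rightarrow> nat set list set list \<Rightarrow> 'r mso" where
  "initial_formula \<theta>s L qs = mso_all1 0 (mso_imp (MNeg (MEx1 1 (MLess 1 0)))
     (mso_conj_list (map (\<lambda>i. mso_imp (MIn 0 i) (MAlpha (step_formula \<theta>s L (qs ! i)) 0))
       [0..<length qs])))"

definition transition_formula :: "'r fo list \<Rightarrow> nat set list set list \<Rightarrow> 'r mso" where
  "transition_formula \<theta>s qs = mso_all1 0 (mso_all1 1
     (mso_imp (MConj (MLess 0 1) (MNeg (MEx1 2 (MConj (MLess 0 2) (MLess 2 1)))))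
       (mso_conj_list
         [mso_imp (MConj (MIn 0 i) (MIn 1 j)) (MAlpha (step_formula \<theta>s (qs ! i) (qs ! j)) 1).
          i \<leftarrow> [0..<length qs], j \<leftarrow> [0..<length qs]])))"

definition accepting_formula :: "nat set list set list \<Rightarrow> 'r mso" where
  "accepting_formula qs = mso_all1 0 (mso_imp (MNeg (MEx1 1 (MLess 0 1)))
     (mso_disj_list (map (MIn 0) (filter (\<lambda>i. [] \<in> qs ! i) [0..<length qs]))))"

definition run_formula :: "'r fo list \<Rightarrow> nat set list set \<Rightarrow> nat set list set list \<Rightarrow> 'r mso" where
  "run_formula \<theta>s L qs = mso_ex2_list [0..<length qs] (mso_conj_list
     [cover_formula (length qs), initial_formula \<theta>s L qs, transition_formula \<theta>s qs,
      accepting_formula qs])"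

text \<open>On the empty convolution the run formula holds vacuously, so whether the empty word is
  accepted has to be hard-wired.\<close>

definition automaton_formula ::
    "'r fo list \<Rightarrow> nat set list set \<Rightarrow> nat set list set list \<Rightarrow> 'r mso" where
  "automaton_formula \<theta>s L qs =
     MConj (run_formula \<theta>s L qs) (if [] \<in> L then mso_true else MEx1 0 mso_true)"

context
  fixes ar :: "'r \<Rightarrow> nat" and I :: "'r \<Rightarrow> 's list \<Rightarrow> bool" and ws :: "'s list list"
    and \<theta>s :: "'r fo list"
begin

lemma mso_sat_cover_formula:
  "mso_sat ar I ws (cover_formula K) e1 Q \<longleftrightarrow> (\<forall>p<conv_len ws. \<exists>i<K. p \<in> Q i)"
  by (simp add: cover_formula_def atLeast0LessThan lessThan_iff Bex_def)

lemma mso_sat_initial_formula: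
  "mso_sat ar I ws (initial_formula \<theta>s L qs) e1 Q \<longleftrightarrow>
    (0 < conv_len ws \<longrightarrow> (\<forall>i<length qs. 0 \<in> Q i \<longrightarrow> residual L [theta_letter ar I \<theta>s ws 0] = qs ! i))"
proof -
  have "mso_sat ar I ws (initial_formula \<theta>s L qs) e1 Q \<longleftrightarrow>
      (\<forall>p<conv_len ws. \<not> (\<exists>q<conv_len ws. q < p) \<longrightarrow>
         (\<forall>i<length qs. p \<in> Q i \<longrightarrow> residual L [theta_letter ar I \<theta>s ws p] = qs ! i))"
    by (auto simp: initial_formula_def fo_sat_step_formula)
  also have "\<dots> \<longleftrightarrow>
      (0 < conv_len ws \<longrightarrow> (\<forall>i<length qs. 0 \<in> Q i \<longrightarrow> residual L [theta_letter ar I \<theta>s ws 0] = qs ! i))"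
    by (rule all_least_below_iff)
  finally show ?thesis .
qed

lemma mso_sat_transition_formula:
  "mso_sat ar I ws (transition_formula \<theta>s qs) e1 Q \<longleftrightarrow>
    (\<forall>p. Suc p < conv_len ws \<longrightarrow> (\<forall>i<length qs. \<forall>j<length qs. p \<in> Q i \<and> Suc p \<in> Q j \<longrightarrow>
       residual (qs ! i) [theta_letter ar I \<theta>s ws (Suc p)] = qs ! j))"
proof -
  have "mso_sat ar I ws (transition_formula \<theta>s qs) e1 Q \<longleftrightarrow>
      (\<forall>p<conv_len ws. \<forall>p'<conv_len ws. p < p' \<and> \<not> (\<exists>r<conv_len ws. p < r \<and> r < p') \<longrightarrow>
         (\<forall>i<length qs. \<forall>j<length qs. p \<in> Q i \<and> p' \<in> Q j \<longrightarrow>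
           residual (qs ! i) [theta_letter ar I \<theta>s ws p'] = qs ! j))"
    by (auto simp: transition_formula_def fo_sat_step_formula)
  also have "\<dots> \<longleftrightarrow>
      (\<forall>p. Suc p < conv_len ws \<longrightarrow> (\<forall>i<length qs. \<forall>j<length qs. p \<in> Q i \<and> Suc p \<in> Q j \<longrightarrow>
         residual (qs ! i) [theta_letter ar I \<theta>s ws (Suc p)] = qs ! j))"
    by (rule all_immediate_successor_below_iff)
  finally show ?thesis .
qed

lemma mso_sat_accepting_formula:
  "mso_sat ar I ws (accepting_formula qs) e1 Q \<longleftrightarrow>
    (0 < conv_len ws \<longrightarrow> (\<exists>i<length qs. [] \<in> qs ! i \<and> conv_len ws - 1 \<in> Q i))"
proof -
  have "mso_sat ar I ws (accepting_formula qs) e1 Q \<longleftrightarrow>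
      (\<forall>p<conv_len ws. \<not> (\<exists>q<conv_len ws. p < q) \<longrightarrow> (\<exists>i<length qs. [] \<in> qs ! i \<and> p \<in> Q i))"
    by (auto simp: accepting_formula_def)
  also have "\<dots> \<longleftrightarrow> (0 < conv_len ws \<longrightarrow> (\<exists>i<length qs. [] \<in> qs ! i \<and> conv_len ws - 1 \<in> Q i))"
    by (rule all_greatest_below_iff)
  finally show ?thesis .
qed

lemma mso_sat_run_formula:
  "mso_sat ar I ws (run_formula \<theta>s L qs) e1 e2 \<longleftrightarrow>
    (\<exists>st. is_run qs L (theta_letter ar I \<theta>s ws) (conv_len ws) st)"
proof -
  have conditions: "mso_sat ar I ws (mso_conj_list [cover_formula (length qs),
        initial_formula \<theta>s L qs, transition_formula \<theta>s qs, accepting_formula qs]) e1 Q \<longleftrightarrow>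
      is_run_cover qs L (theta_letter ar I \<theta>s ws) (conv_len ws) Q" for Q
    by (simp add: is_run_cover_def mso_sat_cover_formula mso_sat_initial_formula
        mso_sat_transition_formula mso_sat_accepting_formula)
  show ?thesis
  proof
    assume "mso_sat ar I ws (run_formula \<theta>s L qs) e1 e2"
    then obtain Q where "is_run_cover qs L (theta_letter ar I \<theta>s ws) (conv_len ws) Q"
      unfolding run_formula_def mso_sat_ex2_list conditions by blast
    then show "\<exists>st. is_run qs L (theta_letter ar I \<theta>s ws) (conv_len ws) st"
      by (rule ex_run_of_run_cover)
  next
    assume "\<exists>st. is_run qs L (theta_letter ar I \<theta>s ws) (conv_len ws) st"
    then obtain st where "is_run qs L (theta_letter ar I \<theta>s ws) (conv_len ws) st"
      by blast
    define Q where "Q i = (if i < length qs then {p. p < conv_len ws \<and> st p = i} else e2 i)" for i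
    have "is_run_cover qs L (theta_letter ar I \<theta>s ws) (conv_len ws) Q"
      unfolding Q_def by (rule is_run_cover_of_run) fact
    moreover have "\<forall>X\<in>set [0..<length qs]. Q X \<subseteq> {..<conv_len ws}"
      by (auto simp: Q_def)
    moreover have "\<forall>X. X \<notin> set [0..<length qs] \<longrightarrow> Q X = e2 X"
      by (simp add: Q_def)
    ultimately show "mso_sat ar I ws (run_formula \<theta>s L qs) e1 e2"
      unfolding run_formula_def mso_sat_ex2_list conditions by blast
  qed
qed

lemma mso_sat_automaton_formula:
  assumes "set qs = range (residual L)"
  shows "mso_sat ar I ws (automaton_formula \<theta>s L qs) e1 e2 \<longleftrightarrow> theta_word ar I \<theta>s ws \<in> L"
proof -
  have "mso_sat ar I ws (automaton_formula \<theta>s L qs) e1 e2 \<longleftrightarrow>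
      (0 < conv_len ws \<longrightarrow> theta_word ar I \<theta>s ws \<in> L) \<and> ([] \<in> L \<or> 0 < conv_len ws)"
  proof -
    have "(\<exists>p. p < conv_len ws) \<longleftrightarrow> 0 < conv_len ws"
      by auto
    then show ?thesis
      by (simp add: automaton_formula_def mso_sat_run_formula ex_run_iff[OF assms] theta_word_def)
  qed
  also have "\<dots> \<longleftrightarrow> theta_word ar I \<theta>s ws \<in> L"
    by (cases "conv_len ws = 0") (auto simp: theta_word_def)
  finally show ?thesis .
qed

end

lemma automaton_formula_closed:
  "mso_fv1 (automaton_formula \<theta>s L qs) = {}" "mso_fv2 (automaton_formula \<theta>s L qs) = {}"
  by (auto simp: automaton_formula_def run_formula_def cover_formula_def initial_formula_def
      transition_formula_def accepting_formula_def)

lemma mso_alphas_automaton_formula: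
  "F \<in> mso_alphas (automaton_formula \<theta>s L qs) \<Longrightarrow> \<exists>q q'. F = step_formula \<theta>s q q'"
  by (auto simp: automaton_formula_def run_formula_def cover_formula_def initial_formula_def
      transition_formula_def accepting_formula_def split: if_splits)

section \<open>Reduction sequences yield MSO-definability\<close>

lemma automaton_formula_admissible:
  assumes "0 < n" "\<forall>\<theta>\<in>set \<theta>s. fo_fv \<theta> \<subseteq> {..<n}" "F \<in> mso_alphas (automaton_formula \<theta>s L qs)"
  shows "fo_fv F \<noteq> {} \<and> fo_fv F \<subseteq> {..<n}"
proof -
  obtain q q' where "F = step_formula \<theta>s q q'"
    using mso_alphas_automaton_formula[OF assms(3)] by blast
  moreover have "insert 0 (\<Union> (fo_fv ` set \<theta>s)) \<subseteq> {..<n}"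
    using assms(1,2) by auto
  ultimately show ?thesis
    using fo_fv_step_formula[of \<theta>s q q'] by blast
qed

lemma mu_support: "{i. mu w i \<noteq> None} = {..<length w}"
  by (auto simp: mu_def)

lemma inj_mu: "inj mu"
proof (rule injI)
  fix a b :: "'s list"
  assume same: "mu a = mu b"
  have "length a = length b"
    using mu_support[of a] mu_support[of b] same by (metis card_lessThan)
  moreover have "a ! i = b ! i" if "i < length a" for i
    using fun_cong[OF same, of i] that \<open>length a = length b\<close> by (simp add: mu_def)
  ultimately show "a = b"
    by (rule nth_equalityI)
qed

lemma map_mu_eq_iff: "map mu xs = map mu ys \<longleftrightarrow> xs = ys"
  by (rule inj_map_eq_map[OF inj_mu])

lemma in_W_mu: "in_W (mu w)"
  unfolding in_W_def mu_support by simp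

lemma less_conv_len_iff: "x < conv_len ws \<longleftrightarrow> (\<exists>w\<in>set ws. x < length w)"
  by (induction ws) (auto simp: conv_len_def)

lemma conv_letter_beyond:
  assumes "conv_len ws \<le> x"
  shows "conv_letter ws x = (\<lambda>_. None)"
proof
  fix j
  have "\<not> x < length (ws ! j)" if "j < length ws"
    using assms that less_conv_len_iff nth_mem not_le by metis
  then show "conv_letter ws x j = None"
    by (simp add: conv_letter_def mu_def)
qed

lemma conv_letter_map_mu:
  "length ws = n \<Longrightarrow> (\<lambda>j. if j < n then (map mu ws ! j) x else None) = conv_letter ws x"
  by (auto simp: conv_letter_def)

text \<open>This is where the requirement that no \<open>\<theta>\<close> holds of \<open>(#, \<dots>, #)\<close> is used: the
  sets defined by the \<open>\<theta>\<close>s are then confined to the positions of the convolution.\<close>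

lemma track_theta_word:
  assumes "\<forall>\<theta>\<in>set \<theta>s. \<not> fo_sat ar I \<theta> (\<lambda>_. None)"
  shows "track (theta_word ar I \<theta>s ws) =
    (\<lambda>i. if i < length \<theta>s then {x. fo_sat ar I (\<theta>s ! i) (conv_letter ws x)} else {})"
proof
  fix i
  have "x < conv_len ws" if "i < length \<theta>s" "fo_sat ar I (\<theta>s ! i) (conv_letter ws x)" for x
    using assms that conv_letter_beyond[of ws x] nth_mem not_le by metis
  then show "track (theta_word ar I \<theta>s ws) i =
      (if i < length \<theta>s then {x. fo_sat ar I (\<theta>s ! i) (conv_letter ws x)} else {})"
    by (auto simp: track_def theta_word_def satisfied_indices_def)
qed

lemma mso_definable_if_reduction_sequence:
  assumes "n \<ge> 1" and "admits_reduction_sequence ar I n (map mu ` R)"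
  shows "mso_definable ar I n R"
proof -
  obtain G \<theta>s where "sfo_fv G \<subseteq> {..<length \<theta>s}"
    and \<theta>s: "\<forall>\<theta>\<in>set \<theta>s. fo_fv \<theta> \<noteq> {} \<and> fo_fv \<theta> \<subseteq> {..<n} \<and> \<not> fo_sat ar I \<theta> (\<lambda>_. None)"
    and reduction: "\<forall>fs. length fs = n \<longrightarrow> (\<forall>f\<in>set fs. in_W f) \<longrightarrow>
      (fs \<in> map mu ` R \<longleftrightarrow> sfo_sat G (\<lambda>i. if i < length \<theta>s then
         {x. fo_sat ar I (\<theta>s ! i) (\<lambda>j. if j < n then (fs ! j) x else None)} else {}))"
    using assms(2) unfolding admits_reduction_sequence_def by blast
  define L where "L = sfo_lang G"
  have "finite (range (residual L))"
    using regular_sfo_lang[of G] unfolding regular_def L_def .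
  then obtain qs where qs: "set qs = range (residual L)"
    by (rule finite_list[THEN exE])
  have "ws \<in> R \<longleftrightarrow> mso_sat ar I ws (automaton_formula \<theta>s L qs) (\<lambda>_. 0) (\<lambda>_. {})"
    if "length ws = n" for ws
  proof -
    have "ws \<in> R \<longleftrightarrow> map mu ws \<in> map mu ` R"
      by (simp add: inj_image_mem_iff[OF inj_mapI[OF inj_mu]])
    also have "\<dots> \<longleftrightarrow> sfo_sat G (\<lambda>i. if i < length \<theta>s then
        {x. fo_sat ar I (\<theta>s ! i) (conv_letter ws x)} else {})"
      unfolding conv_letter_map_mu[OF that, symmetric]
      by (rule reduction[rule_format]) (auto simp: that in_W_mu)
    also have "\<dots> \<longleftrightarrow> sfo_sat G (track (theta_word ar I \<theta>s ws))"
      using \<theta>s by (simp add: track_theta_word)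
    also have "\<dots> \<longleftrightarrow> mso_sat ar I ws (automaton_formula \<theta>s L qs) (\<lambda>_. 0) (\<lambda>_. {})"
      unfolding mso_sat_automaton_formula[OF qs] by (simp add: L_def sfo_lang_def)
    finally show ?thesis .
  qed
  moreover have "fo_fv F \<noteq> {} \<and> fo_fv F \<subseteq> {..<n}"
    if "F \<in> mso_alphas (automaton_formula \<theta>s L qs)" for F
  proof (rule automaton_formula_admissible[OF _ _ that])
    show "0 < n" "\<forall>\<theta>\<in>set \<theta>s. fo_fv \<theta> \<subseteq> {..<n}"
      using assms(1) \<theta>s by auto
  qed
  ultimately show ?thesis
    unfolding mso_definable_def using automaton_formula_closed by blast
qed

section \<open>MSO-definability yields reduction sequences\<close>

definition sfo_true :: sfo where
  "sfo_true = SSub 0 0"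

definition sfo_imp :: "sfo \<Rightarrow> sfo \<Rightarrow> sfo" where
  "sfo_imp G H = SNeg (SConj G (SNeg H))"

definition sfo_all :: "nat \<Rightarrow> sfo \<Rightarrow> sfo" where
  "sfo_all X G = SNeg (SEx X (SNeg G))"

definition sfo_conj_list :: "sfo list \<Rightarrow> sfo" where
  "sfo_conj_list Gs = foldr SConj Gs sfo_true"

text \<open>Only singletons have a \<open>\<ll>\<close>-successor.\<close>

definition sfo_singleton :: "nat \<Rightarrow> sfo" where
  "sfo_singleton X = SEx (Suc X) (SLL X (Suc X))"

lemma sfo_sat_connectives [simp]:
  "sfo_sat sfo_true E"
  "sfo_sat (sfo_imp G H) E \<longleftrightarrow> (sfo_sat G E \<longrightarrow> sfo_sat H E)"
  "sfo_sat (sfo_all X G) E \<longleftrightarrow> (\<forall>S. finite S \<longrightarrow> sfo_sat G (E(X := S)))"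
  by (auto simp: sfo_true_def sfo_imp_def sfo_all_def)

lemma sfo_sat_conj_list [simp]: "sfo_sat (sfo_conj_list Gs) E \<longleftrightarrow> (\<forall>G\<in>set Gs. sfo_sat G E)"
  by (induction Gs) (simp_all add: sfo_conj_list_def)

lemma sfo_fv_connectives [simp]:
  "sfo_fv sfo_true = {0}"
  "sfo_fv (sfo_imp G H) = sfo_fv G \<union> sfo_fv H"
  "sfo_fv (sfo_all X G) = sfo_fv G - {X}"
  "sfo_fv (sfo_singleton X) = {X}"
  by (auto simp: sfo_true_def sfo_imp_def sfo_all_def sfo_singleton_def)

lemma sfo_fv_conj_list [simp]: "sfo_fv (sfo_conj_list Gs) = insert 0 (\<Union> (sfo_fv ` set Gs))"
  by (induction Gs) (auto simp: sfo_conj_list_def sfo_true_def)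

lemma sfo_sat_singleton: "sfo_sat (sfo_singleton X) E \<longleftrightarrow> (\<exists>m. E X = {m})"
proof
  assume "\<exists>m. E X = {m}"
  then obtain m where "E X = {m}"
    by blast
  then have "sfo_sat (SLL X (Suc X)) (E(Suc X := {Suc m}))"
    by simp
  then show "sfo_sat (sfo_singleton X) E"
    unfolding sfo_singleton_def sfo_sat.simps by blast
qed (auto simp: sfo_singleton_def)

text \<open>The translation of \<open>MSO(L)\<close> into the first-order theory of \<open>\<S>\<^sub><\<^sub>\<omega>\<close>: variable 0 holds
  the set of positions of the convolution, the variables below \<open>b\<close> hold the sets defined by
  the \<open>\<theta>\<close>s (\<open>idx F\<close> the one of \<open>\<alpha>\<^sub>F\<close>), a position variable \<open>x\<close> becomes the singleton
  variable \<open>b + 2x\<close> and a set variable \<open>X\<close> becomes \<open>b + 2X + 1\<close>.\<close>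

fun mso_to_sfo :: "nat \<Rightarrow> ('r fo \<Rightarrow> nat) \<Rightarrow> 'r mso \<Rightarrow> sfo" where
  "mso_to_sfo b idx (MLess x y) = SLL (b + 2 * x) (b + 2 * y)"
| "mso_to_sfo b idx (MAlpha F x) = SSub (b + 2 * x) (idx F)"
| "mso_to_sfo b idx (MIn x X) = SSub (b + 2 * x) (b + 2 * X + 1)"
| "mso_to_sfo b idx (MNeg \<phi>) = SNeg (mso_to_sfo b idx \<phi>)"
| "mso_to_sfo b idx (MConj \<phi> \<psi>) = SConj (mso_to_sfo b idx \<phi>) (mso_to_sfo b idx \<psi>)"
| "mso_to_sfo b idx (MEx1 x \<phi>) = SEx (b + 2 * x)
     (SConj (sfo_singleton (b + 2 * x)) (SConj (SSub (b + 2 * x) 0) (mso_to_sfo b idx \<phi>)))"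
| "mso_to_sfo b idx (MEx2 X \<phi>) = SEx (b + 2 * X + 1)
     (SConj (SSub (b + 2 * X + 1) 0) (mso_to_sfo b idx \<phi>))"

lemma sfo_fv_mso_to_sfo:
  assumes "0 < b" "\<forall>F\<in>mso_alphas \<phi>. idx F < b"
  shows "sfo_fv (mso_to_sfo b idx \<phi>) \<subseteq>
    {..<b} \<union> (\<lambda>x. b + 2 * x) ` mso_fv1 \<phi> \<union> (\<lambda>X. b + 2 * X + 1) ` mso_fv2 \<phi>"
  using assms by (induction \<phi>) auto

lemma sfo_sat_mso_to_sfo_MEx1:
  assumes "0 < b" "E 0 = {..<N}"
  shows "sfo_sat (mso_to_sfo b idx (MEx1 x \<phi>)) E \<longleftrightarrow>
    (\<exists>p<N. sfo_sat (mso_to_sfo b idx \<phi>) (E(b + 2 * x := {p})))"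
proof -
  have "b \<noteq> 0"
    using assms(1) by simp
  then have "sfo_sat (mso_to_sfo b idx (MEx1 x \<phi>)) E \<longleftrightarrow>
      (\<exists>S. finite S \<and> (\<exists>p. S = {p}) \<and> S \<subseteq> E 0 \<and> sfo_sat (mso_to_sfo b idx \<phi>) (E(b + 2 * x := S)))"
    by (simp add: sfo_sat_singleton)
  also have "\<dots> \<longleftrightarrow> (\<exists>p<N. sfo_sat (mso_to_sfo b idx \<phi>) (E(b + 2 * x := {p})))"
    unfolding assms(2)
    by (metis finite.emptyI finite_insert insert_subset lessThan_iff empty_subsetI)
  finally show ?thesis .
qed

lemma sfo_sat_mso_to_sfo_MEx2:
  assumes "E 0 = {..<N}"
  shows "sfo_sat (mso_to_sfo b idx (MEx2 X \<phi>)) E \<longleftrightarrow>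
    (\<exists>S\<subseteq>{..<N}. sfo_sat (mso_to_sfo b idx \<phi>) (E(b + 2 * X + 1 := S)))"
proof -
  have "sfo_sat (mso_to_sfo b idx (MEx2 X \<phi>)) E \<longleftrightarrow>
      (\<exists>S. finite S \<and> S \<subseteq> E 0 \<and> sfo_sat (mso_to_sfo b idx \<phi>) (E(b + 2 * X + 1 := S)))"
    by simp
  also have "\<dots> \<longleftrightarrow> (\<exists>S\<subseteq>{..<N}. sfo_sat (mso_to_sfo b idx \<phi>) (E(b + 2 * X + 1 := S)))"
    unfolding assms by (meson finite_lessThan finite_subset)
  finally show ?thesis .
qed

lemma odd_neq_even [simp]: "Suc (2 * X) \<noteq> 2 * x" "2 * x \<noteq> Suc (2 * X)" for x X :: nat
  by presburger+

definition encodes ::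
    "('r \<Rightarrow> nat) \<Rightarrow> ('r \<Rightarrow> 's list \<Rightarrow> bool) \<Rightarrow> 's list list \<Rightarrow> nat \<Rightarrow> ('r fo \<Rightarrow> nat) \<Rightarrow> 'r mso
      \<Rightarrow> (nat \<Rightarrow> nat set) \<Rightarrow> (nat \<Rightarrow> nat) \<Rightarrow> (nat \<Rightarrow> nat set) \<Rightarrow> bool" where
  "encodes ar I ws b idx \<phi> E e1 e2 \<longleftrightarrow>
     E 0 = {..<conv_len ws} \<and>
     (\<forall>F\<in>mso_alphas \<phi>. idx F < b \<and>
        (\<forall>p<conv_len ws. p \<in> E (idx F) \<longleftrightarrow> fo_sat ar I F (conv_letter ws p))) \<and>
     (\<forall>x\<in>mso_fv1 \<phi>. E (b + 2 * x) = {e1 x} \<and> e1 x < conv_len ws) \<and>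
     (\<forall>X\<in>mso_fv2 \<phi>. E (b + 2 * X + 1) = e2 X \<and> e2 X \<subseteq> {..<conv_len ws})"

lemma encodes_MEx1:
  assumes "encodes ar I ws b idx (MEx1 x \<phi>) E e1 e2" "0 < b" "p < conv_len ws"
  shows "encodes ar I ws b idx \<phi> (E(b + 2 * x := {p})) (e1(x := p)) e2"
  using assms unfolding encodes_def by (auto simp: add_eq_self_zero)

lemma encodes_MEx2:
  assumes "encodes ar I ws b idx (MEx2 X \<phi>) E e1 e2" "S \<subseteq> {..<conv_len ws}"
  shows "encodes ar I ws b idx \<phi> (E(b + 2 * X + 1 := S)) e1 (e2(X := S))"
  using assms unfolding encodes_def by auto

lemma sfo_sat_mso_to_sfo:
  assumes "0 < b" "encodes ar I ws b idx \<phi> E e1 e2"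
  shows "sfo_sat (mso_to_sfo b idx \<phi>) E \<longleftrightarrow> mso_sat ar I ws \<phi> e1 e2"
  using assms(2)
proof (induction \<phi> arbitrary: E e1 e2)
  case (MLess x y)
  then have "E (b + 2 * x) = {e1 x}" "E (b + 2 * y) = {e1 y}"
    by (simp_all add: encodes_def)
  then show ?case
    by simp
next
  case (MAlpha F x)
  then have "E (b + 2 * x) = {e1 x}" "e1 x \<in> E (idx F) \<longleftrightarrow> fo_sat ar I F (conv_letter ws (e1 x))"
    by (simp_all add: encodes_def)
  then show ?case
    by simp
next
  case (MIn x X)
  then have "E (b + 2 * x) = {e1 x}" "E (b + 2 * X + 1) = e2 X"
    by (simp_all add: encodes_def)
  then show ?case
    by simp
next
  case (MNeg \<phi>)
  then have "encodes ar I ws b idx \<phi> E e1 e2"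
    by (simp add: encodes_def)
  with MNeg.IH show ?case
    by simp
next
  case (MConj \<phi> \<psi>)
  then have "encodes ar I ws b idx \<phi> E e1 e2" "encodes ar I ws b idx \<psi> E e1 e2"
    by (auto simp: encodes_def)
  with MConj.IH show ?case
    by simp
next
  case (MEx1 x \<phi>)
  then have "E 0 = {..<conv_len ws}"
    by (simp add: encodes_def)
  then have "sfo_sat (mso_to_sfo b idx (MEx1 x \<phi>)) E \<longleftrightarrow>
      (\<exists>p<conv_len ws. sfo_sat (mso_to_sfo b idx \<phi>) (E(b + 2 * x := {p})))"
    by (rule sfo_sat_mso_to_sfo_MEx1[OF assms(1)])
  also have "\<dots> \<longleftrightarrow> (\<exists>p<conv_len ws. mso_sat ar I ws \<phi> (e1(x := p)) e2)"
    using MEx1.IH encodes_MEx1[OF MEx1.prems assms(1)] by blast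
  finally show ?case
    by simp
next
  case (MEx2 X \<phi>)
  then have "E 0 = {..<conv_len ws}"
    by (simp add: encodes_def)
  then have "sfo_sat (mso_to_sfo b idx (MEx2 X \<phi>)) E \<longleftrightarrow>
      (\<exists>S\<subseteq>{..<conv_len ws}. sfo_sat (mso_to_sfo b idx \<phi>) (E(b + 2 * X + 1 := S)))"
    by (rule sfo_sat_mso_to_sfo_MEx2)
  also have "\<dots> \<longleftrightarrow> (\<exists>S\<subseteq>{..<conv_len ws}. mso_sat ar I ws \<phi> e1 (e2(X := S)))"
    using MEx2.IH encodes_MEx2[OF MEx2.prems] by blast
  finally show ?case
    by simp
qed

definition fo_some_defined :: "nat \<Rightarrow> 'r fo" where
  "fo_some_defined n = FNeg (fo_conj_list (map FHash [0..<n]))"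

lemma fo_sat_some_defined: "fo_sat ar I (fo_some_defined n) e \<longleftrightarrow> (\<exists>j<n. e j \<noteq> None)"
  by (auto simp: fo_some_defined_def)

lemma fo_fv_some_defined: "0 < n \<Longrightarrow> fo_fv (fo_some_defined n) = {..<n}"
  by (auto simp: fo_some_defined_def)

text \<open>The \<open>\<theta>\<close>s of the reduction sequence: \<open>\<theta>\<^sub>0\<close> defines the positions of the convolution,
  \<open>\<theta>\<^sub>j\<^sub>+\<^sub>1\<close> the positions of the \<open>j\<close>-th word, and \<open>\<theta>\<^sub>n\<^sub>+\<^sub>1\<^sub>+\<^sub>i\<close> the set defined by \<open>\<alpha>\<^sub>F\<^sub>i\<close>.\<close>

definition reduction_thetas :: "nat \<Rightarrow> 'r fo list \<Rightarrow> 'r fo list" where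
  "reduction_thetas n Fs = fo_some_defined n # map (\<lambda>j. FNeg (FHash j)) [0..<n] @
     map (\<lambda>F. FConj F (fo_some_defined n)) Fs"

lemma reduction_thetas_admissible:
  assumes "0 < n" "\<forall>F\<in>set Fs. fo_fv F \<subseteq> {..<n}" "\<theta> \<in> set (reduction_thetas n Fs)"
  shows "fo_fv \<theta> \<noteq> {} \<and> fo_fv \<theta> \<subseteq> {..<n} \<and> \<not> fo_sat ar I \<theta> (\<lambda>_. None)"
proof -
  have "fo_fv (fo_some_defined n :: 'r fo) = {..<n}" "{..<n} \<noteq> {}"
    using assms(1) fo_fv_some_defined by auto
  with assms(2,3) show ?thesis
    by (auto simp: reduction_thetas_def fo_sat_some_defined subset_iff)
qed

definition downward_closed_formula :: "nat \<Rightarrow> nat \<Rightarrow> sfo" where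
  "downward_closed_formula a X = sfo_all a (sfo_all (Suc a)
     (sfo_imp (SConj (SLL (Suc a) a) (SSub a X)) (SSub (Suc a) X)))"

lemma sfo_sat_downward_closed_formula:
  assumes "X \<noteq> a" "X \<noteq> Suc a"
  shows "sfo_sat (downward_closed_formula a X) E \<longleftrightarrow> (\<forall>m k. m < k \<longrightarrow> k \<in> E X \<longrightarrow> m \<in> E X)"
proof
  assume closed: "sfo_sat (downward_closed_formula a X) E"
  show "\<forall>m k. m < k \<longrightarrow> k \<in> E X \<longrightarrow> m \<in> E X"
  proof (intro allI impI)
    fix m k
    assume "m < k" "k \<in> E X"
    have "sfo_sat (sfo_imp (SConj (SLL (Suc a) a) (SSub a X)) (SSub (Suc a) X))
        (E(a := {k}, Suc a := {m}))"
      using closed unfolding downward_closed_formula_def sfo_sat_connectives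
      by (meson finite.emptyI finite_insert)
    with assms \<open>m < k\<close> \<open>k \<in> E X\<close> show "m \<in> E X"
      by simp
  qed
next
  assume "\<forall>m k. m < k \<longrightarrow> k \<in> E X \<longrightarrow> m \<in> E X"
  with assms show "sfo_sat (downward_closed_formula a X) E"
    by (auto simp: downward_closed_formula_def)
qed

lemma sfo_fv_downward_closed_formula: "sfo_fv (downward_closed_formula a X) \<subseteq> {0, X}"
  by (auto simp: downward_closed_formula_def)

lemma ex_mu_iff_downward_closed:
  assumes "in_W f"
  shows "(\<exists>w. f = mu w) \<longleftrightarrow> (\<forall>m k. m < k \<longrightarrow> f k \<noteq> None \<longrightarrow> f m \<noteq> None)"
proof
  assume "\<forall>m k. m < k \<longrightarrow> f k \<noteq> None \<longrightarrow> f m \<noteq> None"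
  moreover obtain i where "f i = None"
    using assms ex_new_if_finite[OF infinite_UNIV_nat] unfolding in_W_def by blast
  moreover define c where "c = (LEAST i. f i = None)"
  ultimately have support: "f i \<noteq> None \<longleftrightarrow> i < c" for i
    by (metis (mono_tags, lifting) LeastI not_less_Least linorder_neqE_nat)
  have "f = mu (map (\<lambda>i. the (f i)) [0..<c])"
  proof
    fix i
    show "f i = mu (map (\<lambda>i. the (f i)) [0..<c]) i"
      using support[of i] by (cases "i < c") (auto simp: mu_def)
  qed
  then show "\<exists>w. f = mu w"
    by blast
qed (auto simp: mu_def split: if_splits)

definition word_shape_formula :: "nat \<Rightarrow> nat \<Rightarrow> sfo" where
  "word_shape_formula n a = sfo_conj_list (map (\<lambda>j. downward_closed_formula a (Suc j)) [0..<n])"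

lemma sfo_sat_word_shape_formula:
  assumes "n < a"
  shows "sfo_sat (word_shape_formula n a) E \<longleftrightarrow>
    (\<forall>j<n. \<forall>m k. m < k \<longrightarrow> k \<in> E (Suc j) \<longrightarrow> m \<in> E (Suc j))"
  using assms by (auto simp: word_shape_formula_def sfo_sat_downward_closed_formula)

lemma sfo_fv_word_shape_formula: "sfo_fv (word_shape_formula n a) \<subseteq> {..n}"
  using sfo_fv_downward_closed_formula by (fastforce simp: word_shape_formula_def)

lemma finite_mso_alphas: "finite (mso_alphas \<phi>)"
  by (induction \<phi>) auto

lemma fo_sat_some_defined_conv_letter:
  "length ws = n \<Longrightarrow> fo_sat ar I (fo_some_defined n) (conv_letter ws x) \<longleftrightarrow> x < conv_len ws"
  by (auto simp: fo_sat_some_defined conv_letter_def mu_def less_conv_len_iff in_set_conv_nth)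
    (blast intro: nth_mem)

lemma encodes_reduction_thetas:
  fixes \<psi> :: "'r mso" and n :: nat and Fs :: "'r fo list"
  defines "\<theta>s \<equiv> reduction_thetas n Fs"
  assumes "length ws = n" "mso_fv1 \<psi> = {}" "mso_fv2 \<psi> = {}"
    and "\<forall>F\<in>mso_alphas \<psi>. idx F < length \<theta>s \<and> \<theta>s ! idx F = FConj F (fo_some_defined n)"
  shows "encodes ar I ws (length \<theta>s) idx \<psi>
    (\<lambda>i. if i < length \<theta>s then {x. fo_sat ar I (\<theta>s ! i) (conv_letter ws x)} else {}) e1 e2"
proof -
  have "0 < length \<theta>s" "\<theta>s ! 0 = fo_some_defined n"
    by (simp_all add: \<theta>s_def reduction_thetas_def)
  with assms(3-5) show ?thesis
    using fo_sat_some_defined_conv_letter[OF assms(2), of ar I] by (auto simp: encodes_def)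
qed

definition reduction_sets ::
    "('r \<Rightarrow> nat) \<Rightarrow> ('r \<Rightarrow> 's list \<Rightarrow> bool) \<Rightarrow> nat \<Rightarrow> 'r fo list \<Rightarrow> (nat \<Rightarrow> 's option) list
      \<Rightarrow> nat \<Rightarrow> nat set" where
  "reduction_sets ar I n \<theta>s fs = (\<lambda>i. if i < length \<theta>s then
     {x. fo_sat ar I (\<theta>s ! i) (\<lambda>j. if j < n then (fs ! j) x else None)} else {})"

lemma reduction_sets_map_mu:
  assumes "length ws = n"
  shows "reduction_sets ar I n \<theta>s (map mu ws) =
    (\<lambda>i. if i < length \<theta>s then {x. fo_sat ar I (\<theta>s ! i) (conv_letter ws x)} else {})"
  unfolding reduction_sets_def conv_letter_map_mu[OF assms] ..

lemma sfo_sat_word_shape_reduction_sets: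
  fixes n :: nat and Fs :: "'r fo list"
  defines "\<theta>s \<equiv> reduction_thetas n Fs"
  assumes "length fs = n" "\<forall>f\<in>set fs. in_W f"
  shows "sfo_sat (word_shape_formula n (length \<theta>s)) (reduction_sets ar I n \<theta>s fs) \<longleftrightarrow>
    (\<exists>ws. fs = map mu ws)"
proof -
  have "reduction_sets ar I n \<theta>s fs (Suc j) = {x. (fs ! j) x \<noteq> None}" if "j < n" for j
    using that by (simp add: reduction_sets_def \<theta>s_def reduction_thetas_def nth_append)
  moreover have "n < length \<theta>s"
    by (simp add: \<theta>s_def reduction_thetas_def)
  ultimately have "sfo_sat (word_shape_formula n (length \<theta>s)) (reduction_sets ar I n \<theta>s fs) \<longleftrightarrow>
      (\<forall>j<n. \<forall>m k. m < k \<longrightarrow> (fs ! j) k \<noteq> None \<longrightarrow> (fs ! j) m \<noteq> None)"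
    by (simp add: sfo_sat_word_shape_formula)
  also have "\<dots> \<longleftrightarrow> (\<forall>f\<in>set fs. \<forall>m k. m < k \<longrightarrow> f k \<noteq> None \<longrightarrow> f m \<noteq> None)"
    using assms(2) by (auto simp: all_set_conv_all_nth)
  also have "\<dots> \<longleftrightarrow> (\<forall>f\<in>set fs. \<exists>w. f = mu w)"
    using assms(3) by (simp add: ex_mu_iff_downward_closed)
  also have "\<dots> \<longleftrightarrow> (\<exists>ws. fs = map mu ws)"
    by (simp add: ex_map_conv)
  finally show ?thesis .
qed

definition reduction_formula :: "nat \<Rightarrow> 'r fo list \<Rightarrow> ('r fo \<Rightarrow> nat) \<Rightarrow> 'r mso \<Rightarrow> sfo" where
  "reduction_formula n Fs idx \<psi> = SConj (word_shape_formula n (length (reduction_thetas n Fs)))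
     (mso_to_sfo (length (reduction_thetas n Fs)) idx \<psi>)"

context
  fixes n :: nat and Fs :: "'r fo list" and idx :: "'r fo \<Rightarrow> nat" and \<psi> :: "'r mso"
  assumes closed: "mso_fv1 \<psi> = {}" "mso_fv2 \<psi> = {}"
    and idx: "\<forall>F\<in>mso_alphas \<psi>. idx F < length (reduction_thetas n Fs) \<and>
      reduction_thetas n Fs ! idx F = FConj F (fo_some_defined n)"
begin

lemma sfo_fv_reduction_formula:
  "sfo_fv (reduction_formula n Fs idx \<psi>) \<subseteq> {..<length (reduction_thetas n Fs)}"
proof -
  have "0 < length (reduction_thetas n Fs)" "n < length (reduction_thetas n Fs)"
    by (simp_all add: reduction_thetas_def)
  with closed idx show ?thesis
    using sfo_fv_mso_to_sfo[of "length (reduction_thetas n Fs)" \<psi> idx]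
      sfo_fv_word_shape_formula[of n "length (reduction_thetas n Fs)"]
    by (auto simp: reduction_formula_def)
qed

lemma sfo_sat_reduction_formula:
  assumes "length fs = n" "\<forall>f\<in>set fs. in_W f"
  shows "sfo_sat (reduction_formula n Fs idx \<psi>) (reduction_sets ar I n (reduction_thetas n Fs) fs) \<longleftrightarrow>
    (\<exists>ws. fs = map mu ws \<and> mso_sat ar I ws \<psi> (\<lambda>_. 0) (\<lambda>_. {}))"
proof (cases "\<exists>ws. fs = map mu ws")
  case True
  then obtain ws where ws: "fs = map mu ws"
    by blast
  with assms(1) have "length ws = n"
    by simp
  let ?E = "reduction_sets ar I n (reduction_thetas n Fs) fs"
  have "sfo_sat (word_shape_formula n (length (reduction_thetas n Fs))) ?E"
    using sfo_sat_word_shape_reduction_sets[where Fs = Fs and ar = ar and I = I, OF assms] True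
    by simp
  then have "sfo_sat (reduction_formula n Fs idx \<psi>) ?E \<longleftrightarrow>
      sfo_sat (mso_to_sfo (length (reduction_thetas n Fs)) idx \<psi>) ?E"
    by (simp add: reduction_formula_def)
  also have "\<dots> \<longleftrightarrow> mso_sat ar I ws \<psi> (\<lambda>_. 0) (\<lambda>_. {})"
  proof (rule sfo_sat_mso_to_sfo)
    show "0 < length (reduction_thetas n Fs)"
      by (simp add: reduction_thetas_def)
    show "encodes ar I ws (length (reduction_thetas n Fs)) idx \<psi> ?E (\<lambda>_. 0) (\<lambda>_. {})"
      unfolding ws reduction_sets_map_mu[OF \<open>length ws = n\<close>]
      by (rule encodes_reduction_thetas[OF \<open>length ws = n\<close> closed idx])
  qed
  also have "\<dots> \<longleftrightarrow> (\<exists>ws'. fs = map mu ws' \<and> mso_sat ar I ws' \<psi> (\<lambda>_. 0) (\<lambda>_. {}))"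
    using ws by (auto simp: map_mu_eq_iff)
  finally show ?thesis .
next
  case False
  then show ?thesis
    using sfo_sat_word_shape_reduction_sets[where Fs = Fs and ar = ar and I = I, OF assms]
    by (auto simp: reduction_formula_def)
qed

end

lemma reduction_sequence_if_mso_definable:
  fixes R :: "'s list list set" and ar :: "'r \<Rightarrow> nat"
  assumes "n \<ge> 1" and "mso_definable ar I n R"
  shows "admits_reduction_sequence ar I n (map mu ` R)"
proof -
  obtain \<psi> :: "'r mso" where closed: "mso_fv1 \<psi> = {}" "mso_fv2 \<psi> = {}"
    and alphas: "\<forall>F\<in>mso_alphas \<psi>. fo_fv F \<noteq> {} \<and> fo_fv F \<subseteq> {..<n}"
    and defining: "\<forall>ws. length ws = n \<longrightarrow> (ws \<in> R \<longleftrightarrow> mso_sat ar I ws \<psi> (\<lambda>_. 0) (\<lambda>_. {}))"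
    using assms(2) unfolding mso_definable_def by auto
  obtain Fs where Fs: "set Fs = mso_alphas \<psi>"
    using finite_list[OF finite_mso_alphas] by blast
  then obtain i where i: "\<forall>F\<in>mso_alphas \<psi>. i F < length Fs \<and> Fs ! i F = F"
    using bchoice[of "mso_alphas \<psi>" "\<lambda>F i. i < length Fs \<and> Fs ! i = F"] by (metis in_set_conv_nth)
  define idx where "idx F = Suc (n + i F)" for F
  have idx: "\<forall>F\<in>mso_alphas \<psi>. idx F < length (reduction_thetas n Fs) \<and>
      reduction_thetas n Fs ! idx F = FConj F (fo_some_defined n)"
    using i by (simp add: idx_def reduction_thetas_def nth_append)
  have "fs \<in> map mu ` R \<longleftrightarrow>
      sfo_sat (reduction_formula n Fs idx \<psi>) (reduction_sets ar I n (reduction_thetas n Fs) fs)"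
    if "length fs = n" "\<forall>f\<in>set fs. in_W f" for fs
    using sfo_sat_reduction_formula[OF closed idx that] defining that(1) by auto
  moreover have "\<forall>\<theta>\<in>set (reduction_thetas n Fs). fo_fv \<theta> \<noteq> {} \<and> fo_fv \<theta> \<subseteq> {..<n} \<and>
      \<not> fo_sat ar I \<theta> (\<lambda>_. None)"
    using reduction_thetas_admissible[where n = n and Fs = Fs and ar = ar and I = I]
      alphas assms(1) Fs
    by simp
  ultimately show ?thesis
    unfolding admits_reduction_sequence_def reduction_sets_def
    using sfo_fv_reduction_formula[OF closed idx] by blast
qed

theorem proposition4p9:
  fixes ar :: "'r \<Rightarrow> nat" and I :: "'r \<Rightarrow> 's list \<Rightarrow> bool"
    and n :: nat and R :: "'s list list set"
  assumes "n \<ge> 1"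
    and "\<forall>w\<in>R. length w = n"
  shows "mso_definable ar I n R \<longleftrightarrow> admits_reduction_sequence ar I n ((map mu) ` R)"
  using reduction_sequence_if_mso_definable[OF assms(1)]
    mso_definable_if_reduction_sequence[OF assms(1)]
  by blast

end
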